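(* Let $(D,\prec_\vdash,\prec_\dashv,\succ_\vdash,\succ_\dashv,\alpha)$ be a Hom-quadri-dendriform algebra. Define $x\vdash y=x\prec_\vdash y+x\succ_\vdash y$ and $x\dashv y=x\prec_\dashv y+x\succ_\dashv y$ for all $x,y\in D$. Then $(D,\vdash,\dashv,\alpha)$ is a Hom-diassociative algebra.
   Context: All vector spaces are over a field of characteristic zero. A Hom-quadri-dendriform algebra is a tuple $(D,\prec_\vdash,\prec_\dashv,\succ_\vdash,\succ_\dashv,\alpha)$ with $D$ a vector space, four bilinear operations $\prec_\vdash,\prec_\dashv,\succ_\vdash,\succ_\dashv:D\times D\to D$ and a linear map $\alpha:D\to D$ such that for all $x,y,z\in D$: (Q1) $(x\prec_\vdash y)\prec_\vdash\alpha(z)=(x\prec_\dashv y)\prec_\vdash\alpha(z)=\alpha(x)\prec_\vdash(y\prec_\vdash z+y\succ_\vdash z)$; (Q2) $(x\succ_\vdash y)\prec_\vdash\alpha(z)=(x\succ_\dashv y)\prec_\vdash\alpha(z)=\alpha(x)\succ_\vdash(y\prec_\vdash z)$; (Q3) $\alpha(x)\succ_\vdash(y\succ_\vdash z)=(x\prec_\vdash y+x\succ_\vdash y)\succ_\vdash\alpha(z)=(x\prec_\dashv y+x\succ_\dashv y)\succ_\vdash\alpha(z)$; (Q4) $\alpha(x)\succ_\vdash(y\succ_\vdash z)=(x\prec_\dashv y+x\succ_\vdash y)\succ_\vdash\alpha(z)=(x\prec_\vdash y+x\succ_\dashv y)\succ_\vdash\alpha(z)$; (Q5) $(x\prec_\vdash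 y)\prec_\dashv\alpha(z)=\alpha(x)\prec_\vdash(y\prec_\dashv z+y\succ_\dashv z)$; (Q6) $(x\succ_\vdash y)\prec_\dashv\alpha(z)=\alpha(x)\succ_\vdash(y\prec_\dashv z)$; (Q7) $\alpha(x)\succ_\vdash(y\succ_\dashv z)=(x\prec_\vdash y+x\succ_\vdash y)\succ_\dashv\alpha(z)$; (Q8) $(x\prec_\dashv y)\prec_\dashv\alpha(z)=\alpha(x)\prec_\dashv(y\prec_\vdash z+y\succ_\vdash z)=\alpha(x)\prec_\dashv(y\prec_\dashv z+y\succ_\dashv z)$; (Q9) $(x\prec_\dashv y)\prec_\dashv\alpha(z)=\alpha(x)\prec_\dashv(y\prec_\vdash z+y\succ_\dashv z)=\alpha(x)\prec_\dashv(y\prec_\dashv z+y\succ_\vdash z)$; (Q10) $(x\succ_\dashv y)\prec_\dashv\alpha(z)=\alpha(x)\succ_\dashv(y\prec_\vdash z)=\alpha(x)\succ_\dashv(y\prec_\dashv z)$; (Q11) $\alpha(x)\succ_\dashv(y\succ_\vdash z)=\alpha(x)\succ_\dashv(y\succ_\dashv z)=(x\prec_\dashv y+x\succ_\dashv y)\succ_\dashv\alpha(z)$. A Hom-diassociative algebra is a tuple $(D,\dashv,\vdash,\alpha)$ with $\dashv,\vdash$ bilinear and $\alpha$ linear such that for all $x,y,z\in D$: $(x\dashv y)\dashv\alpha(z)=\alpha(x)\dashv(y\dashv z)$; $(x\dashv y)\dashv\alpha(z)=\alpha(x)\dashv(y\vdash z)$; $(x\vdash y)\dashv\alpha(z)=\alpha(x)\vdash(y\dashv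 z)$; $(x\dashv y)\vdash\alpha(z)=\alpha(x)\vdash(y\vdash z)$; $(x\vdash y)\vdash\alpha(z)=\alpha(x)\vdash(y\vdash z)$. *)

theory Defs
  imports Complex_Main
begin

definition bilinear_op ::
  "('k::field \<Rightarrow> 'v::ab_group_add \<Rightarrow> 'v) \<Rightarrow> ('v \<Rightarrow> 'v \<Rightarrow> 'v) \<Rightarrow> bool" where
  "bilinear_op scale m \<longleftrightarrow>
     (\<forall>x. Vector_Spaces.linear scale scale (m x)) \<and>
     (\<forall>y. Vector_Spaces.linear scale scale (\<lambda>x. m x y))"

text \<open>Arguments: scale, pl = prec_vdash, pr = prec_dashv, sl = succ_vdash,
  sr = succ_dashv, alpha.\<close>

definition hom_quadri_dendriform ::
  "('k::field_char_0 \<Rightarrow> 'v::ab_group_add \<Rightarrow> 'v) \<Rightarrow> ('v \<Rightarrow> 'v \<Rightarrow> 'v) \<Rightarrow> ('v \<Rightarrow> 'v \<Rightarrow> 'v)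
     \<Rightarrow> ('v \<Rightarrow> 'v \<Rightarrow> 'v) \<Rightarrow> ('v \<Rightarrow> 'v \<Rightarrow> 'v) \<Rightarrow> ('v \<Rightarrow> 'v) \<Rightarrow> bool" where
  "hom_quadri_dendriform scale pl pr sl sr \<alpha> \<longleftrightarrow>
     vector_space scale \<and>
     bilinear_op scale pl \<and> bilinear_op scale pr \<and> bilinear_op scale sl \<and> bilinear_op scale sr \<and>
     Vector_Spaces.linear scale scale \<alpha> \<and>
     (\<forall>x y z.
       \<comment> \<open>Q1\<close>
       pl (pl x y) (\<alpha> z) = pl (pr x y) (\<alpha> z) \<and>
       pl (pr x y) (\<alpha> z) = pl (\<alpha> x) (pl y z + sl y z) \<and>
       \<comment> \<open>Q2\<close>
       pl (sl x y) (\<alpha> z) = pl (sr x y) (\<alpha> z) \<and>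
       pl (sr x y) (\<alpha> z) = sl (\<alpha> x) (pl y z) \<and>
       \<comment> \<open>Q3\<close>
       sl (\<alpha> x) (sl y z) = sl (pl x y + sl x y) (\<alpha> z) \<and>
       sl (pl x y + sl x y) (\<alpha> z) = sl (pr x y + sr x y) (\<alpha> z) \<and>
       \<comment> \<open>Q4\<close>
       sl (\<alpha> x) (sl y z) = sl (pr x y + sl x y) (\<alpha> z) \<and>
       sl (pr x y + sl x y) (\<alpha> z) = sl (pl x y + sr x y) (\<alpha> z) \<and>
       \<comment> \<open>Q5\<close>
       pr (pl x y) (\<alpha> z) = pl (\<alpha> x) (pr y z + sr y z) \<and>
       \<comment> \<open>Q6\<close>
       pr (sl x y) (\<alpha> z) = sl (\<alpha> x) (pr y z) \<and>
       \<comment> \<open>Q7\<close>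
       sl (\<alpha> x) (sr y z) = sr (pl x y + sl x y) (\<alpha> z) \<and>
       \<comment> \<open>Q8\<close>
       pr (pr x y) (\<alpha> z) = pr (\<alpha> x) (pl y z + sl y z) \<and>
       pr (\<alpha> x) (pl y z + sl y z) = pr (\<alpha> x) (pr y z + sr y z) \<and>
       \<comment> \<open>Q9\<close>
       pr (pr x y) (\<alpha> z) = pr (\<alpha> x) (pl y z + sr y z) \<and>
       pr (\<alpha> x) (pl y z + sr y z) = pr (\<alpha> x) (pr y z + sl y z) \<and>
       \<comment> \<open>Q10\<close>
       pr (sr x y) (\<alpha> z) = sr (\<alpha> x) (pl y z) \<and>
       sr (\<alpha> x) (pl y z) = sr (\<alpha> x) (pr y z) \<and>
       \<comment> \<open>Q11\<close>
       sr (\<alpha> x) (sl y z) = sr (\<alpha> x) (sr y z) \<and>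
       sr (\<alpha> x) (sr y z) = sr (pr x y + sr x y) (\<alpha> z))"

text \<open>Hom-diassociative algebra (D, dashv, vdash, alpha); ld = dashv, rd = vdash.\<close>

definition hom_diassociative ::
  "('k::field_char_0 \<Rightarrow> 'v::ab_group_add \<Rightarrow> 'v) \<Rightarrow> ('v \<Rightarrow> 'v \<Rightarrow> 'v) \<Rightarrow> ('v \<Rightarrow> 'v \<Rightarrow> 'v)
     \<Rightarrow> ('v \<Rightarrow> 'v) \<Rightarrow> bool" where
  "hom_diassociative scale ld rd \<alpha> \<longleftrightarrow>
     vector_space scale \<and>
     bilinear_op scale ld \<and> bilinear_op scale rd \<and>
     Vector_Spaces.linear scale scale \<alpha> \<and>
     (\<forall>x y z.
       ld (ld x y) (\<alpha> z) = ld (\<alpha> x) (ld y z) \<and>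
       ld (ld x y) (\<alpha> z) = ld (\<alpha> x) (rd y z) \<and>
       ld (rd x y) (\<alpha> z) = rd (\<alpha> x) (ld y z) \<and>
       rd (ld x y) (\<alpha> z) = rd (\<alpha> x) (rd y z) \<and>
       rd (rd x y) (\<alpha> z) = rd (\<alpha> x) (rd y z))"

end

theory Submission
  imports Defs
begin

text \<open>Splitting \<open>x \<dashv> y = x \<prec>\<^sub>\<dashv> y + x \<succ>\<^sub>\<dashv> y\<close> and \<open>x \<turnstile> y = x \<prec>\<^sub>\<turnstile> y + x \<succ>\<^sub>\<turnstile> y\<close>
  by biadditivity, each side of a Hom-diassociative identity becomes a sum of three
  terms, and the Hom-quadri-dendriform axioms match these terms one by one.\<close>

lemma bilinear_op_add:
  assumes "bilinear_op s m" "bilinear_op s n"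
  shows "bilinear_op s (\<lambda>x y. m x y + n x y)"
proof -
  have "vector_space_pair s s"
    using assms(1) by (simp add: bilinear_op_def vector_space_pair_def Vector_Spaces.linear_iff)
  then show ?thesis
    using assms unfolding bilinear_op_def by (simp add: vector_space_pair.linear_compose_add)
qed

lemma bilinear_op_add_left: "bilinear_op s m \<Longrightarrow> m (a + b) c = m a c + m b c"
  unfolding bilinear_op_def Vector_Spaces.linear_iff by blast

lemma bilinear_op_add_right: "bilinear_op s m \<Longrightarrow> m c (a + b) = m c a + m c b"
  unfolding bilinear_op_def Vector_Spaces.linear_iff by blast

locale hom_quadri_dendriform_biadditive =
  fixes pl pr sl sr :: "'v::ab_group_add \<Rightarrow> 'v \<Rightarrow> 'v" and \<alpha> :: "'v \<Rightarrow> 'v"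
  assumes pl_add_left: "pl (a + b) c = pl a c + pl b c"
    and pr_add_left: "pr (a + b) c = pr a c + pr b c"
    and sl_add_left: "sl (a + b) c = sl a c + sl b c"
    and sr_add_left: "sr (a + b) c = sr a c + sr b c"
    and pl_add_right: "pl c (a + b) = pl c a + pl c b"
    and pr_add_right: "pr c (a + b) = pr c a + pr c b"
    and sl_add_right: "sl c (a + b) = sl c a + sl c b"
    and sr_add_right: "sr c (a + b) = sr c a + sr c b"
    and Q1a: "pl (pl x y) (\<alpha> z) = pl (pr x y) (\<alpha> z)"
    and Q1b: "pl (pr x y) (\<alpha> z) = pl (\<alpha> x) (pl y z + sl y z)"
    and Q2a: "pl (sl x y) (\<alpha> z) = pl (sr x y) (\<alpha> z)"
    and Q2b: "pl (sr x y) (\<alpha> z) = sl (\<alpha> x) (pl y z)"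
    and Q3a: "sl (\<alpha> x) (sl y z) = sl (pl x y + sl x y) (\<alpha> z)"
    and Q3b: "sl (pl x y + sl x y) (\<alpha> z) = sl (pr x y + sr x y) (\<alpha> z)"
    and Q5: "pr (pl x y) (\<alpha> z) = pl (\<alpha> x) (pr y z + sr y z)"
    and Q6: "pr (sl x y) (\<alpha> z) = sl (\<alpha> x) (pr y z)"
    and Q7: "sl (\<alpha> x) (sr y z) = sr (pl x y + sl x y) (\<alpha> z)"
    and Q8a: "pr (pr x y) (\<alpha> z) = pr (\<alpha> x) (pl y z + sl y z)"
    and Q8b: "pr (\<alpha> x) (pl y z + sl y z) = pr (\<alpha> x) (pr y z + sr y z)"
    and Q10a: "pr (sr x y) (\<alpha> z) = sr (\<alpha> x) (pl y z)"
    and Q10b: "sr (\<alpha> x) (pl y z) = sr (\<alpha> x) (pr y z)"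
    and Q11a: "sr (\<alpha> x) (sl y z) = sr (\<alpha> x) (sr y z)"
    and Q11b: "sr (\<alpha> x) (sr y z) = sr (pr x y + sr x y) (\<alpha> z)"
begin

definition dashv :: "'v \<Rightarrow> 'v \<Rightarrow> 'v" where
  "dashv x y = pr x y + sr x y"

definition vdash :: "'v \<Rightarrow> 'v \<Rightarrow> 'v" where
  "vdash x y = pl x y + sl x y"

lemma dashv_dashv_assoc: "dashv (dashv x y) (\<alpha> z) = dashv (\<alpha> x) (dashv y z)"
proof -
  have "dashv (dashv x y) (\<alpha> z) = pr (pr x y) (\<alpha> z) + pr (sr x y) (\<alpha> z) + sr (dashv x y) (\<alpha> z)"
    by (simp add: dashv_def pr_add_left)
  also have "\<dots> = pr (\<alpha> x) (dashv y z) + sr (\<alpha> x) (pr y z) + sr (\<alpha> x) (sr y z)"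
    by (simp only: dashv_def Q8a Q8b Q10a Q10b Q11b)
  also have "\<dots> = dashv (\<alpha> x) (dashv y z)"
    by (simp add: dashv_def sr_add_right add.assoc)
  finally show ?thesis .
qed

lemma dashv_vdash_assoc: "dashv (dashv x y) (\<alpha> z) = dashv (\<alpha> x) (vdash y z)"
proof -
  have "dashv (dashv x y) (\<alpha> z) = pr (pr x y) (\<alpha> z) + pr (sr x y) (\<alpha> z) + sr (dashv x y) (\<alpha> z)"
    by (simp add: dashv_def pr_add_left)
  also have "\<dots> = pr (\<alpha> x) (vdash y z) + sr (\<alpha> x) (pl y z) + sr (\<alpha> x) (sl y z)"
    by (simp only: dashv_def vdash_def Q8a Q10a Q11a Q11b)
  also have "\<dots> = dashv (\<alpha> x) (vdash y z)"
    by (simp add: dashv_def vdash_def sr_add_right add.assoc)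
  finally show ?thesis .
qed

lemma vdash_dashv_assoc: "dashv (vdash x y) (\<alpha> z) = vdash (\<alpha> x) (dashv y z)"
proof -
  have "dashv (vdash x y) (\<alpha> z) = pr (pl x y) (\<alpha> z) + pr (sl x y) (\<alpha> z) + sr (vdash x y) (\<alpha> z)"
    by (simp add: dashv_def vdash_def pr_add_left)
  also have "\<dots> = pl (\<alpha> x) (dashv y z) + sl (\<alpha> x) (pr y z) + sl (\<alpha> x) (sr y z)"
    by (simp only: dashv_def vdash_def Q5 Q6 Q7)
  also have "\<dots> = vdash (\<alpha> x) (dashv y z)"
    by (simp add: dashv_def vdash_def sl_add_right add.assoc)
  finally show ?thesis .
qed

lemma dashv_vdash_vdash_assoc: "vdash (dashv x y) (\<alpha> z) = vdash (\<alpha> x) (vdash y z)"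
proof -
  have "vdash (dashv x y) (\<alpha> z) = pl (pr x y) (\<alpha> z) + pl (sr x y) (\<alpha> z) + sl (dashv x y) (\<alpha> z)"
    by (simp add: dashv_def vdash_def pl_add_left)
  also have "\<dots> = pl (\<alpha> x) (vdash y z) + sl (\<alpha> x) (pl y z) + sl (\<alpha> x) (sl y z)"
    by (simp only: dashv_def vdash_def Q1b Q2b Q3a Q3b)
  also have "\<dots> = vdash (\<alpha> x) (vdash y z)"
    by (simp add: vdash_def sl_add_right add.assoc)
  finally show ?thesis .
qed

lemma vdash_vdash_assoc: "vdash (vdash x y) (\<alpha> z) = vdash (\<alpha> x) (vdash y z)"
proof -
  have "vdash (vdash x y) (\<alpha> z) = pl (pl x y) (\<alpha> z) + pl (sl x y) (\<alpha> z) + sl (vdash x y) (\<alpha> z)"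
    by (simp add: vdash_def pl_add_left)
  also have "\<dots> = pl (\<alpha> x) (vdash y z) + sl (\<alpha> x) (pl y z) + sl (\<alpha> x) (sl y z)"
    by (simp only: vdash_def Q1a Q1b Q2a Q2b Q3a)
  also have "\<dots> = vdash (\<alpha> x) (vdash y z)"
    by (simp add: vdash_def sl_add_right add.assoc)
  finally show ?thesis .
qed

end

theorem proposition3p3:
  fixes scale :: "'k::field_char_0 \<Rightarrow> 'v::ab_group_add \<Rightarrow> 'v"
    and pl pr sl sr :: "'v \<Rightarrow> 'v \<Rightarrow> 'v" and \<alpha> :: "'v \<Rightarrow> 'v"
  assumes "hom_quadri_dendriform scale pl pr sl sr \<alpha>"
  shows "hom_diassociative scale (\<lambda>x y. pr x y + sr x y) (\<lambda>x y. pl x y + sl x y) \<alpha>"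
proof -
  have bilinear: "bilinear_op scale pl" "bilinear_op scale pr" "bilinear_op scale sl"
    "bilinear_op scale sr"
    using assms by (simp_all add: hom_quadri_dendriform_def)
  interpret hom_quadri_dendriform_biadditive pl pr sl sr \<alpha>
    using assms bilinear[THEN bilinear_op_add_left] bilinear[THEN bilinear_op_add_right]
    by unfold_locales (simp_all add: hom_quadri_dendriform_def)
  have vector_space: "vector_space scale" and linear: "Vector_Spaces.linear scale scale \<alpha>"
    using assms by (simp_all add: hom_quadri_dendriform_def)
  have ops: "(\<lambda>x y. pr x y + sr x y) = dashv" "(\<lambda>x y. pl x y + sl x y) = vdash"
    by (simp_all add: fun_eq_iff dashv_def vdash_def)
  have "bilinear_op scale dashv" "bilinear_op scale vdash"
    unfolding ops[symmetric] using bilinear by (simp_all add: bilinear_op_add)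
  then show ?thesis
    unfolding ops unfolding hom_diassociative_def
    using vector_space linear dashv_dashv_assoc dashv_vdash_assoc vdash_dashv_assoc
      dashv_vdash_vdash_assoc vdash_vdash_assoc
    by blast
qed

end
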